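(* Let $S_1>0$ and $t>1$, and set $f(S_1)=(t-1)\big(1+(t+1)S_1\big)$. With $R_{DF},R_{CF}$ as defined in the context, for every $S_2\ge 0$: if $S_2>f(S_1)$ then $R_{CF}(S_2)>R_{DF}(S_2)$, and if $S_2\le f(S_1)$ then $R_{DF}(S_2)\ge R_{CF}(S_2)$. Consequently $\max\{R_{DF}(S_2),R_{CF}(S_2)\}$ equals $R_{DF}(S_2)$ for $S_2\le f(S_1)$ and $R_{CF}(S_2)$ for $S_2>f(S_1)$.
   Context: $C(x)=\log_2(1+x)$. For fixed $S_1>0$, $t>0$ and $S_2\ge0$, $$R_{DF}(S_2)=\frac12\max_{0\le\rho\le1}\min\Big\{C(tS_1)+C\big((1-\rho^2)S_1\big),\;C(S_1)+C\big(S_1+S_2+2\rho\sqrt{S_1S_2}\big)\Big\},$$ $$R_{CF}(S_2)=\frac12C(S_1)+\frac12C\Big(S_1+\frac{tS_1S_2}{1+(t+1)S_1+S_2}\Big).$$ These are the DF and CF rates of a half-duplex Gaussian relay channel with source–destination SNR $S_1$, source–relay/source–destination gain ratio $t$, and relay–destination SNR $S_2$. *)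

theory Defs
  imports "HOL-Analysis.Analysis"
begin

definition Cap :: "real \<Rightarrow> real" where
  "Cap x = log 2 (1 + x)"

text \<open>DF rate: the maximum over rho in [0,1] is written as Sup of the (compact, attained) image.\<close>
definition R_DF :: "real \<Rightarrow> real \<Rightarrow> real \<Rightarrow> real" where
  "R_DF S1 t S2 = (1/2) * (SUP \<rho>\<in>{0..1}.
      min (Cap (t * S1) + Cap ((1 - \<rho>^2) * S1))
          (Cap S1 + Cap (S1 + S2 + 2 * \<rho> * sqrt (S1 * S2))))"

definition R_CF :: "real \<Rightarrow> real \<Rightarrow> real \<Rightarrow> real" where
  "R_CF S1 t S2 = (1/2) * Cap S1 + (1/2) * Cap (S1 + t * S1 * S2 / (1 + (t + 1) * S1 + S2))"

definition fthr :: "real \<Rightarrow> real \<Rightarrow> real" where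
  "fthr S1 t = (t - 1) * (1 + (t + 1) * S1)"

end

theory Submission
  imports Defs
begin

text \<open>Both rates share the term C(S1)/2, so everything reduces to comparing the second
  terms. The first DF term is largest at \<rho> = 0, so 2 R_DF \<le> C(tS1) + C(S1); and taking
  \<rho> = 0 gives 2 R_DF \<ge> C(S1) + min (C(tS1)) (C(S1 + S2)). The CF rate is
  (C(S1) + C(X))/2 for an effective SNR X \<le> S1 + S2, and X \<le> tS1 exactly when
  S2 \<le> f(S1). Hence CF wins strictly iff X > tS1, and otherwise \<rho> = 0 already makes DF
  at least as good.\<close>

lemma Cap_mono: "-1 < x \<Longrightarrow> x \<le> y \<Longrightarrow> Cap x \<le> Cap y"
  unfolding Cap_def by simp

lemma Cap_strict_mono: "-1 < x \<Longrightarrow> x < y \<Longrightarrow> Cap x < Cap y"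
  unfolding Cap_def by simp

definition cf_snr :: "real \<Rightarrow> real \<Rightarrow> real \<Rightarrow> real" where
  "cf_snr S1 t S2 = S1 + t * S1 * S2 / (1 + (t + 1) * S1 + S2)"

lemma R_CF_eq_cf_snr: "R_CF S1 t S2 = (Cap S1 + Cap (cf_snr S1 t S2)) / 2"
  unfolding R_CF_def cf_snr_def by simp

lemma cf_snr_nonneg:
  assumes "S1 \<ge> 0" "t \<ge> 0" "S2 \<ge> 0"
  shows "cf_snr S1 t S2 \<ge> 0"
  unfolding cf_snr_def using assms by (simp add: add_nonneg_nonneg)

lemma cf_snr_le_direct_snr:
  assumes "S1 \<ge> 0" "t \<ge> 0" "S2 \<ge> 0"
  shows "cf_snr S1 t S2 \<le> S1 + S2"
proof -
  define D where "D = 1 + (t + 1) * S1 + S2"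
  have "D > 0" "t * S1 \<le> D"
    using assms unfolding D_def by (simp_all add: add_pos_nonneg algebra_simps)
  then have "t * S1 * S2 / D \<le> S2"
    using assms by (simp add: divide_simps) (metis mult.commute mult_right_mono)
  then show ?thesis unfolding cf_snr_def D_def by simp
qed

lemma cf_snr_le_relay_snr_iff:
  assumes "S1 > 0" "t \<ge> 0" "S2 \<ge> 0"
  shows "cf_snr S1 t S2 \<le> t * S1 \<longleftrightarrow> S2 \<le> fthr S1 t"
proof -
  define D where "D = 1 + (t + 1) * S1 + S2"
  have "D > 0" using assms unfolding D_def by (simp add: add_pos_nonneg)
  have "cf_snr S1 t S2 \<le> t * S1 \<longleftrightarrow> t * S1 * S2 / D \<le> (t - 1) * S1"
    unfolding cf_snr_def D_def by (simp add: algebra_simps)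
  also have "\<dots> \<longleftrightarrow> S1 * (t * S2) \<le> S1 * ((t - 1) * D)"
    using \<open>D > 0\<close> by (simp add: divide_simps algebra_simps)
  also have "\<dots> \<longleftrightarrow> t * S2 \<le> (t - 1) * D"
    using assms by simp
  also have "\<dots> \<longleftrightarrow> S2 \<le> fthr S1 t"
    unfolding D_def fthr_def by (simp add: algebra_simps)
  finally show ?thesis .
qed

lemma df_min_le_relay_bound:
  assumes "S1 \<ge> 0" "\<rho> \<in> {0..1}"
  shows "min (Cap (t * S1) + Cap ((1 - \<rho>^2) * S1))
             (Cap S1 + Cap (S1 + S2 + 2 * \<rho> * sqrt (S1 * S2)))
           \<le> Cap (t * S1) + Cap S1"
proof -
  have "\<rho>^2 \<le> 1" using assms by (simp add: power_le_one)
  then have "0 \<le> (1 - \<rho>^2) * S1" "(1 - \<rho>^2) * S1 \<le> S1"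
    using assms by (simp_all add: mult_left_le_one_le)
  then have "Cap ((1 - \<rho>^2) * S1) \<le> Cap S1"
    by (intro Cap_mono) auto
  then show ?thesis by linarith
qed

lemma R_DF_le:
  assumes "S1 \<ge> 0"
  shows "R_DF S1 t S2 \<le> (Cap (t * S1) + Cap S1) / 2"
  unfolding R_DF_def using df_min_le_relay_bound[OF assms] by (simp add: cSUP_least del: atLeastAtMost_iff)

lemma R_DF_ge_at_zero:
  assumes "S1 \<ge> 0"
  shows "(Cap S1 + min (Cap (t * S1)) (Cap (S1 + S2))) / 2 \<le> R_DF S1 t S2"
proof -
  define g where "g = (\<lambda>\<rho>::real. min (Cap (t * S1) + Cap ((1 - \<rho>^2) * S1))
      (Cap S1 + Cap (S1 + S2 + 2 * \<rho> * sqrt (S1 * S2))))"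
  have "bdd_above (g ` {0..1})"
    using df_min_le_relay_bound[OF assms] unfolding g_def by (intro bdd_aboveI2) auto
  then have "g 0 \<le> (SUP \<rho>\<in>{0..1}. g \<rho>)"
    by (intro cSUP_upper) auto
  moreover have "g 0 = Cap S1 + min (Cap (t * S1)) (Cap (S1 + S2))"
    unfolding g_def by simp
  ultimately show ?thesis
    unfolding R_DF_def g_def by simp
qed

theorem mainTheorem3:
  fixes S1 t S2 :: real
  assumes "S1 > 0" and "t > 1" and "S2 \<ge> 0"
  shows "(S2 > fthr S1 t \<longrightarrow> R_CF S1 t S2 > R_DF S1 t S2)
       \<and> (S2 \<le> fthr S1 t \<longrightarrow> R_DF S1 t S2 \<ge> R_CF S1 t S2)
       \<and> max (R_DF S1 t S2) (R_CF S1 t S2)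
           = (if S2 \<le> fthr S1 t then R_DF S1 t S2 else R_CF S1 t S2)"
proof -
  let ?X = "cf_snr S1 t S2"
  have S1: "S1 \<ge> 0" and t: "t \<ge> 0" using assms by simp_all
  have X_nonneg: "?X \<ge> 0" using cf_snr_nonneg[OF S1 t assms(3)] .
  have CF_wins: "R_CF S1 t S2 > R_DF S1 t S2" if "S2 > fthr S1 t"
  proof -
    have "0 \<le> t * S1" using S1 t by simp
    moreover have "t * S1 < ?X" using that cf_snr_le_relay_snr_iff[OF assms(1) t assms(3)] by linarith
    ultimately have "Cap (t * S1) < Cap ?X"
      by (intro Cap_strict_mono) auto
    then show ?thesis using R_DF_le[OF S1, of t S2] by (simp add: R_CF_eq_cf_snr)
  qed
  have DF_wins: "R_DF S1 t S2 \<ge> R_CF S1 t S2" if "S2 \<le> fthr S1 t"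
  proof -
    have "Cap ?X \<le> Cap (t * S1)"
      using that cf_snr_le_relay_snr_iff[OF assms(1) t assms(3)] X_nonneg
      by (intro Cap_mono) auto
    moreover have "Cap ?X \<le> Cap (S1 + S2)"
      using cf_snr_le_direct_snr[OF S1 t assms(3)] X_nonneg by (intro Cap_mono) auto
    ultimately show ?thesis
      using R_DF_ge_at_zero[OF S1, of t S2] by (simp add: R_CF_eq_cf_snr)
  qed
  show ?thesis using CF_wins DF_wins by auto
qed

end
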